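(* Let $A',B'$ be subspaces of a finite-dimensional Hilbert space $\mathcal{H}$, with orthogonal projectors $\Pi_{A'},\Pi_{B'}$, and let $0\le\epsilon<1$. Then there exists a (possibly zero) subspace $A\subseteq A'$ with the following properties. (a) For all $v\in A$, $\|\Pi_{B'}v\|_2^2\ge(1-\sqrt{\epsilon})\|v\|_2^2$. (b) Letting $B\subseteq B'$ be the subspace spanned by the vectors $\Pi_{B'}v$, $v\in A$, and $\Pi_B$ its orthogonal projector, $\Pi_B\le(1-\sqrt{\epsilon})^{-1}\Pi_{B'}\Pi_{A'}\Pi_{B'}$ (in the positive semidefinite order). (c) If $\rho$ is any positive operator with $\operatorname{Tr}\rho\le 1$, support contained in $A'$, and $\operatorname{Tr}[\rho\Pi_{B'}]\ge1-\epsilon$, then $A$ is nonzero and $\operatorname{Tr}[\rho\,\Pi_B]\ge1-2\sqrt{\epsilon}$. *)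

theory Defs
  imports "HOL-Analysis.Analysis"
begin

text \<open>The finite-dimensional Hilbert space is modelled as complex^'n ('n a finite index type),
  with the standard inner product; its norm coincides with the library norm on complex^'n.
  Operators are complex matrices complex^'n^'n acting by *v.\<close>

definition cinner :: "complex^'n \<Rightarrow> complex^'n \<Rightarrow> complex" where
  "cinner x y = (\<Sum>i\<in>UNIV. cnj (x$i) * y$i)"

definition csubspace :: "(complex^'n) set \<Rightarrow> bool" where
  "csubspace S \<longleftrightarrow> 0 \<in> S \<and> (\<forall>x\<in>S. \<forall>y\<in>S. x + y \<in> S) \<and> (\<forall>c. \<forall>x\<in>S. c *s x \<in> S)"

definition cspan :: "(complex^'n) set \<Rightarrow> (complex^'n) set" where
  "cspan S = {x. \<exists>F c. finite F \<and> F \<subseteq> S \<and> x = (\<Sum>v\<in>F. c v *s v)}"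

definition is_proj :: "complex^'n^'n \<Rightarrow> (complex^'n) set \<Rightarrow> bool" where
  "is_proj P S \<longleftrightarrow> (\<forall>x. P *v x \<in> S \<and> (\<forall>y\<in>S. cinner y (x - P *v x) = 0))"

definition psd :: "complex^'n^'n \<Rightarrow> bool" where
  "psd M \<longleftrightarrow> (\<forall>x. Im (cinner x (M *v x)) = 0 \<and> Re (cinner x (M *v x)) \<ge> 0)"

definition loewner_le :: "complex^'n^'n \<Rightarrow> complex^'n^'n \<Rightarrow> bool" where
  "loewner_le A B \<longleftrightarrow> psd (B - A)"

end

theory Submission
  imports Defs
begin

text \<open>Diagonalize the compression \<open>PA' PB' PA'\<close> of \<open>PB'\<close> to \<open>A'\<close> in an orthonormal eigenbasis
  \<open>E\<close> of \<open>A'\<close>; its eigenvalues are \<open>\<lambda>\<^sub>e = \<parallel>PB' e\<parallel>\<^sup>2 \<in> [0,1]\<close>, and the vectors \<open>PB' e\<close> are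
  pairwise orthogonal. Take \<open>A\<close> to be the span of the eigenvectors with \<open>\<lambda>\<^sub>e \<ge> t = 1 - \<surd>\<epsilon>\<close>.
  Then \<open>\<parallel>PB' v\<parallel>\<^sup>2 = \<Sum> \<lambda>\<^sub>e |\<langle>e,v\<rangle>|\<^sup>2 \<ge> t \<parallel>v\<parallel>\<^sup>2\<close> on \<open>A\<close>, and the projector onto
  \<open>B = PB' A\<close> is \<open>\<Sum>\<^bsub>\<lambda>\<^sub>e \<ge> t\<^esub> |PB' e\<rangle>\<langle>PB' e| / \<lambda>\<^sub>e \<le> t\<^sup>-\<^sup>1 \<Sum>\<^sub>e |PB' e\<rangle>\<langle>PB' e| = t\<^sup>-\<^sup>1 PB' PA' PB'\<close>.
  For \<open>\<rho>\<close> supported in \<open>A'\<close> with weights \<open>r\<^sub>e = \<langle>e,\<rho> e\<rangle>\<close> one gets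
  \<open>Tr \<rho> PB' = \<Sum> \<lambda>\<^sub>e r\<^sub>e\<close> and \<open>Tr \<rho> \<Pi>\<^sub>B = \<Sum>\<^bsub>\<lambda>\<^sub>e \<ge> t\<^esub> \<lambda>\<^sub>e r\<^sub>e\<close>, and a Markov-type estimate turns
  \<open>\<Sum> \<lambda>\<^sub>e r\<^sub>e \<ge> 1 - \<epsilon>\<close> into \<open>\<Sum>\<^bsub>\<lambda>\<^sub>e \<ge> t\<^esub> \<lambda>\<^sub>e r\<^sub>e \<ge> 1 - \<surd>\<epsilon>\<close>.\<close>

section \<open>Complex inner product\<close>

lemma cinner_add_right: "cinner x (y + z) = cinner x y + cinner x z"
  by (simp add: cinner_def distrib_left sum.distrib)

lemma cinner_add_left: "cinner (x + y) z = cinner x z + cinner y z"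
  by (simp add: cinner_def distrib_right sum.distrib)

lemma cinner_diff_right: "cinner x (y - z) = cinner x y - cinner x z"
  by (simp add: cinner_def right_diff_distrib sum_subtractf)

lemma cinner_diff_left: "cinner (x - y) z = cinner x z - cinner y z"
  by (simp add: cinner_def left_diff_distrib sum_subtractf)

lemma cinner_scale_right: "cinner x (c *s y) = c * cinner x y"
  by (simp add: cinner_def sum_distrib_left mult_ac)

lemma cinner_scale_left: "cinner (c *s x) y = cnj c * cinner x y"
  by (simp add: cinner_def sum_distrib_left mult_ac)

lemma cinner_zero_right [simp]: "cinner x 0 = 0"
  by (simp add: cinner_def)

lemma cinner_zero_left [simp]: "cinner 0 x = 0"
  by (simp add: cinner_def)

lemma cinner_commute: "cinner y x = cnj (cinner x y)"
  by (simp add: cinner_def mult.commute)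

lemma cinner_eq_0_commute: "cinner x y = 0 \<longleftrightarrow> cinner y x = 0"
  by (metis cinner_commute complex_cnj_zero_iff)

lemma cinner_sum_right: "cinner x (\<Sum>k\<in>K. f k) = (\<Sum>k\<in>K. cinner x (f k))"
  by (induction K rule: infinite_finite_induct) (auto simp: cinner_add_right)

lemma cinner_sum_left: "cinner (\<Sum>k\<in>K. f k) x = (\<Sum>k\<in>K. cinner (f k) x)"
  by (induction K rule: infinite_finite_induct) (auto simp: cinner_add_left)

lemma cinner_self: "cinner x x = complex_of_real ((norm x)\<^sup>2)"
proof -
  have "cinner x x = (\<Sum>i\<in>UNIV. complex_of_real ((norm (x$i))\<^sup>2))"
    unfolding cinner_def by (intro sum.cong refl) (metis complex_norm_square mult.commute)
  also have "\<dots> = complex_of_real ((norm x)\<^sup>2)"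
    by (simp add: norm_vec_def L2_set_def sum_nonneg)
  finally show ?thesis .
qed

lemma norm_sq_eq_cinner: "(norm x)\<^sup>2 = Re (cinner x x)"
  by (simp add: cinner_self)

lemma cinner_self_eq_0 [simp]: "cinner x x = 0 \<longleftrightarrow> x = 0"
  by (simp add: cinner_self)

lemma cnj_mult_self: "cnj z * z = complex_of_real ((cmod z)\<^sup>2)"
  by (metis complex_norm_square mult.commute)

lemma scaleR_vec_eq_scale: "(r::real) *\<^sub>R (x::complex^'n) = complex_of_real r *s x"
  by (simp add: vec_eq_iff of_real_def)

lemma scaleR_matrix_vector_mult:
  "((r::real) *\<^sub>R (A::complex^'n^'m)) *v x = complex_of_real r *s (A *v x)"
  by (simp add: vec_eq_iff matrix_vector_mult_def sum_distrib_left of_real_def mult_ac)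

lemma csubspace_imp_subspace: "csubspace S \<Longrightarrow> subspace S"
  unfolding csubspace_def subspace_def by (auto simp: scaleR_vec_eq_scale)

lemma csubspace_scale: "csubspace S \<Longrightarrow> x \<in> S \<Longrightarrow> c *s x \<in> S"
  unfolding csubspace_def by auto

lemma csubspace_add: "csubspace S \<Longrightarrow> x \<in> S \<Longrightarrow> y \<in> S \<Longrightarrow> x + y \<in> S"
  unfolding csubspace_def by auto

lemma csubspace_diff: "csubspace S \<Longrightarrow> x \<in> S \<Longrightarrow> y \<in> S \<Longrightarrow> x - y \<in> S"
  using subspace_diff[OF csubspace_imp_subspace] by blast

lemma csubspace_orthogonal:
  "csubspace S \<Longrightarrow> csubspace {x\<in>S. \<forall>e\<in>F. cinner e x = 0}"
  unfolding csubspace_def by (auto simp: cinner_add_right cinner_scale_right)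

lemma cspan_sum:
  assumes "finite K" and "\<And>k. k \<in> K \<Longrightarrow> f k \<in> S"
  shows "(\<Sum>k\<in>K. c k *s f k) \<in> cspan S"
proof -
  have scale_sum: "(\<Sum>k\<in>L. c k) *s v = (\<Sum>k\<in>L. c k *s v)" for L and v :: "complex^'n"
    by (induction L rule: infinite_finite_induct) auto
  have "(\<Sum>k\<in>K. c k *s f k) = (\<Sum>v\<in>f ` K. \<Sum>k\<in>{k\<in>K. f k = v}. c k *s f k)"
    by (rule sum.image_gen[OF assms(1)])
  also have "\<dots> = (\<Sum>v\<in>f ` K. (\<Sum>k\<in>{k\<in>K. f k = v}. c k) *s v)"
    by (intro sum.cong refl) (simp add: scale_sum)
  finally show ?thesis
    unfolding cspan_def using assms by (intro CollectI exI[of _ "f ` K"]) auto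
qed

lemma cspan_orthogonal:
  assumes "\<And>s. s \<in> S \<Longrightarrow> cinner s z = 0" and "b \<in> cspan S"
  shows "cinner b z = 0"
proof -
  obtain F c where "F \<subseteq> S" "b = (\<Sum>v\<in>F. c v *s v)"
    using assms(2) unfolding cspan_def by blast
  then show ?thesis
    using assms(1) by (auto simp: cinner_sum_left cinner_scale_left intro!: sum.neutral)
qed

section \<open>Hermitian matrices and orthogonal projectors\<close>

definition hermitian :: "complex^'n^'n \<Rightarrow> bool" where
  "hermitian M \<longleftrightarrow> (\<forall>x y. cinner x (M *v y) = cinner (M *v x) y)"

lemma psd_imp_hermitian:
  assumes "psd M"
  shows "hermitian M"
  unfolding hermitian_def
proof (intro allI)
  fix x y :: "complex^'a"
  let ?a = "cinner y (M *v x)" and ?b = "cinner x (M *v y)"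
  have real: "Im (cinner z (M *v z)) = 0" for z
    using assms unfolding psd_def by blast
  have expand: "cinner (u + v) (M *v (u + v)) =
      cinner u (M *v u) + cinner v (M *v v) + cinner u (M *v v) + cinner v (M *v u)" for u v
    by (simp add: matrix_vector_right_distrib cinner_add_left cinner_add_right)
  \<comment> \<open>Polarization: the quadratic form is real on \<open>y + x\<close> and on \<open>\<i> y + x\<close>.\<close>
  have "Im (?a + ?b) = 0"
    using real[of "y + x"] real[of x] real[of y] by (simp add: expand)
  moreover have "Im ((- \<i>) * ?a + \<i> * ?b) = 0"
    using real[of "\<i> *s y + x"] real[of x] real[of "\<i> *s y"]
    by (simp add: expand cinner_scale_left cinner_scale_right vector_scalar_commute)
  ultimately have "?b = cnj ?a"
    by (simp add: complex_eq_iff)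
  then show "cinner x (M *v y) = cinner (M *v x) y"
    by (simp add: cinner_commute[of "M *v x"])
qed

lemma psd_cinner_self:
  assumes "psd M"
  shows "cinner (M *v x) x = complex_of_real (Re (cinner x (M *v x)))"
proof -
  have "Im (cinner x (M *v x)) = 0"
    using assms by (simp add: psd_def)
  then show ?thesis
    using psd_imp_hermitian[OF assms] by (simp add: hermitian_def complex_eq_iff)
qed

lemma is_proj_in: "is_proj P S \<Longrightarrow> P *v x \<in> S"
  unfolding is_proj_def by blast

lemma is_proj_orthogonal: "is_proj P S \<Longrightarrow> y \<in> S \<Longrightarrow> cinner y (x - P *v x) = 0"
  unfolding is_proj_def by blast

lemma is_proj_eqI:
  assumes P: "is_proj P S" and "y \<in> S" and "\<And>s. s \<in> S \<Longrightarrow> cinner s (x - y) = 0"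
  shows "P *v x = y"
proof -
  have "cinner (P *v x - y) (P *v x - y) =
      (cinner (P *v x) (x - y) - cinner y (x - y)) -
      (cinner (P *v x) (x - P *v x) - cinner y (x - P *v x))"
    by (simp add: cinner_diff_right cinner_diff_left algebra_simps)
  also have "\<dots> = 0"
    using assms is_proj_in[OF P] is_proj_orthogonal[OF P] by simp
  finally show ?thesis by simp
qed

lemma is_proj_fixes: "is_proj P S \<Longrightarrow> y \<in> S \<Longrightarrow> P *v y = y"
  by (rule is_proj_eqI) auto

lemma is_proj_hermitian:
  assumes P: "is_proj P S"
  shows "cinner x (P *v y) = cinner (P *v x) y"
proof -
  have "cinner x (P *v y) = cinner (P *v x) (P *v y) + cinner (x - P *v x) (P *v y)"
    by (simp add: cinner_diff_left)
  also have "\<dots> = cinner (P *v x) (P *v y)"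
    by (metis P add.right_neutral cinner_eq_0_commute is_proj_in is_proj_orthogonal)
  also have "\<dots> = cinner (P *v x) y - cinner (P *v x) (y - P *v y)"
    by (simp add: cinner_diff_right)
  also have "\<dots> = cinner (P *v x) y"
    using is_proj_orthogonal[OF P is_proj_in[OF P]] by simp
  finally show ?thesis .
qed

lemma is_proj_cinner_proj:
  "is_proj P S \<Longrightarrow> cinner (P *v x) (P *v y) = cinner x (P *v y)"
  by (metis is_proj_hermitian is_proj_fixes is_proj_in)

lemma is_proj_norm_le:
  assumes P: "is_proj P S"
  shows "(norm (P *v x))\<^sup>2 \<le> (norm x)\<^sup>2"
proof -
  define r where "r = x - P *v x"
  have orth: "cinner (P *v x) r = 0" "cinner r (P *v x) = 0"
    using is_proj_orthogonal[OF P is_proj_in[OF P]] cinner_eq_0_commute by (auto simp: r_def)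
  have "cinner x x = cinner (P *v x + r) (P *v x + r)"
    by (simp add: r_def)
  also have "\<dots> = cinner (P *v x) (P *v x) + cinner r r"
    using orth by (simp add: cinner_add_left cinner_add_right)
  finally have "Re (cinner x x) = Re (cinner (P *v x) (P *v x)) + Re (cinner r r)"
    by simp
  then show ?thesis
    by (simp add: norm_sq_eq_cinner[symmetric])
qed

section \<open>Spectral theorem for Hermitian matrices\<close>

lemma continuous_on_quadratic_form:
  "continuous_on UNIV (\<lambda>x::complex^'n. Re (cinner x ((M::complex^'n^'n) *v x)))"
  unfolding cinner_def matrix_vector_mult_def
  by (intro continuous_intros linear_continuous_on bounded_linear_vec_nth)

lemma rayleigh_maximizer_exists:
  fixes M :: "complex^'n^'n"
  assumes S: "csubspace S" and "S \<noteq> {0}"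
  shows "\<exists>e\<in>S. norm e = 1 \<and>
    (\<forall>y\<in>S. Re (cinner y (M *v y)) \<le> Re (cinner e (M *v e)) * (norm y)\<^sup>2)"
proof -
  define f where "f x = Re (cinner x (M *v x))" for x
  define K where "K = S \<inter> sphere 0 1"
  have S_scale: "y \<in> S \<Longrightarrow> (1 / norm y) *\<^sub>R y \<in> S" for y
    using subspace_scale[OF csubspace_imp_subspace[OF S]] by blast
  have "compact K"
    unfolding K_def
    by (intro closed_Int_compact closed_subspace csubspace_imp_subspace S compact_sphere)
  moreover have "K \<noteq> {}"
  proof -
    have "0 \<in> S"
      using S by (simp add: csubspace_def)
    then obtain x where "x \<in> S" "x \<noteq> 0"
      using assms(2) by blast
    then have "(1 / norm x) *\<^sub>R x \<in> K"
      using S_scale unfolding K_def by simp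
    then show ?thesis
      by blast
  qed
  moreover have "continuous_on K f"
    unfolding f_def by (rule continuous_on_subset[OF continuous_on_quadratic_form]) simp
  ultimately obtain e where eK: "e \<in> K" and emax: "\<And>y. y \<in> K \<Longrightarrow> f y \<le> f e"
    using continuous_attains_sup[of K f] by auto
  have "f y \<le> f e * (norm y)\<^sup>2" if "y \<in> S" for y
  proof (cases "y = 0")
    case True
    then show ?thesis by (simp add: f_def)
  next
    case False
    define u where "u = (1 / norm y) *\<^sub>R y"
    have "u \<in> K"
      using False S_scale that unfolding K_def u_def by auto
    have "y = complex_of_real (norm y) *s u"
      using False by (simp add: u_def flip: scaleR_vec_eq_scale)
    then have "f y = f (complex_of_real (norm y) *s u)"
      by (rule arg_cong)
    also have "\<dots> = (norm y)\<^sup>2 * f u"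
      by (simp add: f_def vector_scalar_commute cinner_scale_left cinner_scale_right power2_eq_square)
    also have "\<dots> \<le> (norm y)\<^sup>2 * f e"
      using emax[OF \<open>u \<in> K\<close>] by (simp add: mult_left_mono)
    finally show ?thesis
      by (simp add: mult.commute)
  qed
  moreover have "e \<in> S" "norm e = 1"
    using eK by (auto simp: K_def)
  ultimately show ?thesis
    unfolding f_def by blast
qed

lemma eq_0_if_quadratic_nonpos:
  fixes a c :: real
  assumes "a \<ge> 0" and "\<And>t. t > 0 \<Longrightarrow> 2 * t * a + t\<^sup>2 * c \<le> 0"
  shows "a = 0"
proof (rule ccontr)
  assume "a \<noteq> 0"
  with assms(1) have a: "a > 0" by simp
  define t where "t = a / (\<bar>c\<bar> + 1)"
  have t: "t > 0"
    using a by (simp add: t_def)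
  have "t * \<bar>c\<bar> \<le> a"
    using a by (simp add: t_def field_simps)
  then have "t\<^sup>2 * \<bar>c\<bar> \<le> t * a"
    using t by (simp add: power2_eq_square mult.assoc mult_left_mono)
  moreover have "t\<^sup>2 * (- \<bar>c\<bar>) \<le> t\<^sup>2 * c"
    by (intro mult_left_mono) auto
  moreover have "t * a > 0"
    using t a by simp
  ultimately have "2 * t * a + t\<^sup>2 * c > 0"
    by linarith
  then show False
    using assms(2)[OF t] by simp
qed

lemma rayleigh_maximizer_eigenvector:
  fixes M :: "complex^'n^'n"
  assumes H: "hermitian M" and S: "csubspace S" and inv: "\<And>x. x \<in> S \<Longrightarrow> M *v x \<in> S"
    and eS: "e \<in> S" and e: "norm e = 1"
    and max: "\<And>y. y \<in> S \<Longrightarrow> Re (cinner y (M *v y)) \<le> Re (cinner e (M *v e)) * (norm y)\<^sup>2"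
  shows "M *v e = complex_of_real (Re (cinner e (M *v e))) *s e"
proof -
  define l where "l = Re (cinner e (M *v e))"
  define w where "w = M *v e - complex_of_real l *s e"
  have ee: "cinner e e = 1"
    using e by (simp add: cinner_self)
  have wS: "w \<in> S"
    unfolding w_def using inv eS S by (simp add: csubspace_diff csubspace_scale)
  have Me: "M *v e = w + complex_of_real l *s e"
    by (simp add: w_def)
  have h1: "cinner e (M *v w) = cinner w w + complex_of_real l * cinner e w"
    using H unfolding hermitian_def by (simp add: Me cinner_add_left cinner_scale_left)
  have h2: "cinner w (M *v e) = cinner w w + complex_of_real l * cinner w e"
    by (simp add: Me cinner_add_right cinner_scale_right)
  have h3: "Re (cinner e w) = 0"
    using ee by (simp add: w_def l_def cinner_diff_right cinner_scale_right)
  have h4: "Re (cinner w e) = 0"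
    using h3 by (subst cinner_commute) simp
  \<comment> \<open>Moving from \<open>e\<close> towards \<open>w\<close> would increase the Rayleigh quotient to first order unless \<open>w = 0\<close>.\<close>
  have "2 * t * Re (cinner w w) + t\<^sup>2 * (Re (cinner w (M *v w)) - l * Re (cinner w w)) \<le> 0"
    if "t > 0" for t
  proof -
    define z where "z = e + complex_of_real t *s w"
    have "z \<in> S"
      unfolding z_def using S eS wS by (simp add: csubspace_add csubspace_scale)
    moreover have "Re (cinner z (M *v z)) = l + 2 * t * Re (cinner w w) + t\<^sup>2 * Re (cinner w (M *v w))"
      unfolding z_def using h1 h2 h3 h4
      by (simp add: matrix_vector_right_distrib vector_scalar_commute cinner_add_left cinner_add_right
          cinner_scale_left cinner_scale_right l_def power2_eq_square algebra_simps)
    moreover have "(norm z)\<^sup>2 = 1 + t\<^sup>2 * Re (cinner w w)"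
      unfolding z_def norm_sq_eq_cinner using h3 h4 ee
      by (simp add: cinner_add_left cinner_add_right cinner_scale_left cinner_scale_right
          power2_eq_square algebra_simps)
    ultimately show ?thesis
      using max[of z] by (simp add: l_def algebra_simps)
  qed
  then have "Re (cinner w w) = 0"
    by (intro eq_0_if_quadratic_nonpos) (auto simp flip: norm_sq_eq_cinner)
  then have "w = 0"
    by (simp flip: norm_sq_eq_cinner)
  then show ?thesis
    by (simp add: w_def l_def)
qed

definition orthonormal :: "(complex^'n) set \<Rightarrow> bool" where
  "orthonormal E \<longleftrightarrow> finite E \<and>
     (\<forall>e\<in>E. \<forall>e'\<in>E. cinner e e' = (if e = e' then 1 else 0))"

lemma hermitian_spectral:
  fixes M :: "complex^'n^'n"
  assumes H: "hermitian M"
  shows "csubspace S \<Longrightarrow> (\<And>x. x \<in> S \<Longrightarrow> M *v x \<in> S) \<Longrightarrow> \<exists>E lam. orthonormal E \<and> E \<subseteq> S \<and>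
     (\<forall>e\<in>E. M *v e = complex_of_real (lam e) *s e) \<and> (\<forall>x\<in>S. x = (\<Sum>e\<in>E. cinner e x *s e))"
proof (induction "dim S" arbitrary: S rule: less_induct)
  case less
  show ?case
  proof (cases "S = {0}")
    case True
    show ?thesis
      by (rule exI[of _ "{}"]) (auto simp: True orthonormal_def)
  next
    case False
    then obtain e where eS: "e \<in> S" and e: "norm e = 1"
      and max: "\<forall>y\<in>S. Re (cinner y (M *v y)) \<le> Re (cinner e (M *v e)) * (norm y)\<^sup>2"
      using rayleigh_maximizer_exists[OF less.prems(1)] by blast
    define l where "l = Re (cinner e (M *v e))"
    have Me: "M *v e = complex_of_real l *s e"
      unfolding l_def using rayleigh_maximizer_eigenvector[OF H less.prems eS e] max by blast
    have ee: "cinner e e = 1"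
      using e by (simp add: cinner_self)
    define S' where "S' = {x\<in>S. \<forall>e'\<in>{e}. cinner e' x = 0}"
    have "csubspace S'"
      unfolding S'_def by (rule csubspace_orthogonal[OF less.prems(1)])
    moreover have "M *v x \<in> S'" if "x \<in> S'" for x
    proof -
      have "cinner e (M *v x) = cinner (M *v e) x"
        using H unfolding hermitian_def by blast
      then show ?thesis
        using that less.prems(2) by (simp add: Me cinner_scale_left S'_def)
    qed
    moreover have "dim S' < dim S"
    proof -
      have "e \<notin> S'"
        using ee by (simp add: S'_def)
      then have "S' \<subset> S"
        using eS unfolding S'_def by blast
      then show ?thesis
        using \<open>csubspace S'\<close> less.prems(1)
        by (metis csubspace_imp_subspace dim_psubset span_eq_iff)
    qed
    ultimately obtain E' lam' where E': "orthonormal E'" "E' \<subseteq> S'"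
      and eig': "\<forall>e\<in>E'. M *v e = complex_of_real (lam' e) *s e"
      and exp': "\<forall>x\<in>S'. x = (\<Sum>e\<in>E'. cinner e x *s e)"
      using less.hyps by blast
    have orth: "cinner e e' = 0" "cinner e' e = 0" if "e' \<in> E'" for e'
      using E'(2) that cinner_eq_0_commute unfolding S'_def by auto
    have eE': "e \<notin> E'"
      using orth ee by fastforce
    have "x = (\<Sum>e'\<in>insert e E'. cinner e' x *s e')" if xS: "x \<in> S" for x
    proof -
      define y where "y = x - cinner e x *s e"
      have "y \<in> S'"
        using xS eS ee less.prems(1)
        by (simp add: y_def S'_def csubspace_diff csubspace_scale cinner_diff_right cinner_scale_right)
      then have "y = (\<Sum>e'\<in>E'. cinner e' y *s e')"
        using exp' by blast
      also have "\<dots> = (\<Sum>e'\<in>E'. cinner e' x *s e')"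
        by (intro sum.cong refl) (simp add: y_def cinner_diff_right cinner_scale_right orth)
      finally show ?thesis
        using E'(1) eE' by (simp add: y_def orthonormal_def algebra_simps)
    qed
    moreover have "orthonormal (insert e E')"
      using E'(1) ee orth unfolding orthonormal_def by auto
    moreover have "\<forall>x\<in>insert e E'. M *v x = complex_of_real ((lam'(e := l)) x) *s x"
      using eig' Me eE' by auto
    moreover have "insert e E' \<subseteq> S"
      using E'(2) eS unfolding S'_def by auto
    ultimately show ?thesis
      by blast
  qed
qed

lemma trace_matrix_mult_expansion:
  fixes R X :: "complex^'n^'n"
  assumes "finite E" and R: "\<And>x. R *v x = (\<Sum>e\<in>E. cinner (h e) x *s e)"
  shows "trace (R ** X) = (\<Sum>e\<in>E. cinner (h e) (X *v e))"
proof -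
  have R_entry: "R$i$j = (\<Sum>e\<in>E. cnj (h e $ j) * e $ i)" for i j
  proof -
    have "R$i$j = (R *v axis j 1) $ i"
      by (simp add: matrix_vector_mult_def axis_def if_distrib cong: if_cong)
    also have "\<dots> = (\<Sum>e\<in>E. cnj (h e $ j) * e $ i)"
      unfolding R by (simp add: sum_component cinner_def axis_def if_distrib cong: if_cong)
    finally show ?thesis .
  qed
  have "trace (R ** X) = (\<Sum>i\<in>UNIV. \<Sum>j\<in>UNIV. \<Sum>e\<in>E. cnj (h e $ j) * e $ i * X$j$i)"
    by (simp add: trace_def matrix_matrix_mult_def R_entry sum_distrib_right)
  also have "\<dots> = (\<Sum>e\<in>E. \<Sum>j\<in>UNIV. \<Sum>i\<in>UNIV. cnj (h e $ j) * e $ i * X$j$i)"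
    by (subst sum.swap) (simp add: sum.swap[of _ E])
  also have "\<dots> = (\<Sum>e\<in>E. cinner (h e) (X *v e))"
    by (simp add: cinner_def matrix_vector_mult_def sum_distrib_left mult_ac)
  finally show ?thesis .
qed

lemma weighted_mass_above_threshold:
  fixes r lam :: "'a \<Rightarrow> real" and s :: real
  assumes "finite E" and r: "\<And>e. e \<in> E \<Longrightarrow> 0 \<le> r e"
    and lam: "\<And>e. e \<in> E \<Longrightarrow> 0 \<le> lam e" "\<And>e. e \<in> E \<Longrightarrow> lam e \<le> 1"
    and mass: "sum r E \<le> 1" and weighted: "1 - s\<^sup>2 \<le> (\<Sum>e\<in>E. lam e * r e)"
    and s: "0 \<le> s" "s < 1"
  shows "1 - s \<le> (\<Sum>e\<in>{e\<in>E. 1 - s \<le> lam e}. lam e * r e)"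
proof -
  define K where "K = {e\<in>E. 1 - s \<le> lam e}"
  define N where "N = {e\<in>E. lam e < 1 - s}"
  have split: "sum f E = sum f K + sum f N" for f :: "'a \<Rightarrow> real"
  proof -
    have "E = K \<union> N" "K \<inter> N = {}"
      by (auto simp: K_def N_def)
    then show ?thesis
      using \<open>finite E\<close> by (simp add: sum.union_disjoint)
  qed
  define T where "T = (\<Sum>e\<in>K. lam e * r e)"
  define q where "q = sum r N"
  have T_le: "T \<le> sum r K"
    unfolding T_def by (intro sum_mono) (use lam r in \<open>auto simp: K_def intro!: mult_left_le_one_le\<close>)
  have q_le: "q \<le> 1 - T"
    using mass split[of r] T_le by (simp add: q_def)
  have weighted_split: "1 - s\<^sup>2 \<le> T + (\<Sum>e\<in>N. lam e * r e)"
    using weighted split[of "\<lambda>e. lam e * r e"] by (simp add: T_def)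
  show ?thesis
  proof (cases "s = 0")
    case True
    \<comment> \<open>The first-order bound below degenerates; instead \<open>lam < 1\<close> forces \<open>r = 0\<close> on \<open>N\<close>.\<close>
    have nonneg: "\<forall>e\<in>N. 0 \<le> (1 - lam e) * r e"
      using r lam by (auto simp: N_def)
    have "(\<Sum>e\<in>N. (1 - lam e) * r e) = q - (\<Sum>e\<in>N. lam e * r e)"
      by (simp add: q_def left_diff_distrib sum_subtractf)
    also have "\<dots> \<le> 0"
      using weighted_split q_le True by simp
    finally have "(\<Sum>e\<in>N. (1 - lam e) * r e) \<le> 0" .
    moreover have "0 \<le> (\<Sum>e\<in>N. (1 - lam e) * r e)"
      using nonneg by (simp add: sum_nonneg)
    ultimately have "(\<Sum>e\<in>N. (1 - lam e) * r e) = 0"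
      by linarith
    moreover have "finite N"
      using \<open>finite E\<close> by (simp add: N_def)
    ultimately have "\<forall>e\<in>N. (1 - lam e) * r e = 0"
      using sum_nonneg_eq_0_iff[of N "\<lambda>e. (1 - lam e) * r e"] nonneg by blast
    then have "\<forall>e\<in>N. r e = 0"
      using True by (auto simp: N_def)
    then show ?thesis
      using weighted_split True by (simp add: T_def K_def)
  next
    case False
    have "(\<Sum>e\<in>N. lam e * r e) \<le> (1 - s) * q"
      unfolding q_def sum_distrib_left
      by (intro sum_mono) (use r in \<open>auto simp: N_def intro: mult_right_mono\<close>)
    moreover have "(1 - s) * q \<le> (1 - s) * (1 - T)"
      using q_le s(2) by (intro mult_left_mono) auto
    ultimately have "1 - s\<^sup>2 \<le> T + (1 - s) * (1 - T)"
      using weighted_split by linarith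
    then have "s * (1 - s) \<le> s * T"
      by (simp add: power2_eq_square algebra_simps)
    then show ?thesis
      using False s by (simp add: T_def K_def)
  qed
qed

section \<open>Eigenvectors of the compression \<open>PA' PB' PA'\<close>\<close>

locale projector_pair =
  fixes A' B' :: "(complex^'n) set" and PA' PB' :: "complex^'n^'n"
  assumes csubspace_A': "csubspace A'"
    and proj_A': "is_proj PA' A'" and proj_B': "is_proj PB' B'"
begin

definition compression where
  "compression = PA' ** PB' ** PA'"

lemma compression_apply: "compression *v x = PA' *v (PB' *v (PA' *v x))"
  by (simp add: compression_def matrix_vector_mul_assoc matrix_mul_assoc)

lemma hermitian_compression: "hermitian compression"
  unfolding hermitian_def compression_apply
  by (metis is_proj_hermitian proj_A' proj_B')

lemma cinner_proj_B'_proj_B':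
  assumes "u \<in> A'" "v \<in> A'"
  shows "cinner (PB' *v u) (PB' *v v) = cinner u (compression *v v)"
proof -
  have "cinner (PB' *v u) (PB' *v v) = cinner u (PB' *v v)"
    by (rule is_proj_cinner_proj[OF proj_B'])
  also have "\<dots> = cinner (PA' *v u) (PB' *v v)"
    using is_proj_fixes[OF proj_A' assms(1)] by simp
  also have "\<dots> = cinner u (compression *v v)"
    by (simp add: compression_apply is_proj_fixes[OF proj_A' assms(2)] is_proj_hermitian[OF proj_A'])
  finally show ?thesis .
qed

end

locale compression_eigenbasis = projector_pair +
  fixes E and lam :: "_ \<Rightarrow> real"
  assumes orthonormal_E: "orthonormal E" and E_subset: "E \<subseteq> A'"
    and eigen: "\<And>e. e \<in> E \<Longrightarrow> compression *v e = complex_of_real (lam e) *s e"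
    and expansion: "\<And>x. x \<in> A' \<Longrightarrow> x = (\<Sum>e\<in>E. cinner e x *s e)"

lemma (in projector_pair) compression_eigenbasis_exists:
  "\<exists>E lam. compression_eigenbasis A' B' PA' PB' E lam"
proof -
  have "compression *v x \<in> A'" for x
    by (simp add: compression_apply is_proj_in[OF proj_A'])
  then obtain E lam where "orthonormal E" "E \<subseteq> A'"
    "\<forall>e\<in>E. compression *v e = complex_of_real (lam e) *s e"
    "\<forall>x\<in>A'. x = (\<Sum>e\<in>E. cinner e x *s e)"
    using hermitian_spectral[OF hermitian_compression csubspace_A'] by blast
  then have "compression_eigenbasis A' B' PA' PB' E lam"
    by unfold_locales auto
  then show ?thesis
    by blast
qed

context compression_eigenbasis
begin

lemma finite_E: "finite E"
  using orthonormal_E by (simp add: orthonormal_def)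

lemma cinner_E: "e \<in> E \<Longrightarrow> e' \<in> E \<Longrightarrow> cinner e e' = (if e = e' then 1 else 0)"
  using orthonormal_E by (simp add: orthonormal_def)

lemma parseval: "x \<in> A' \<Longrightarrow> cinner x y = (\<Sum>e\<in>E. cnj (cinner e x) * cinner e y)"
  by (subst expansion) (simp_all add: cinner_sum_left cinner_scale_left)

lemma norm_sq_expansion: "x \<in> A' \<Longrightarrow> (norm x)\<^sup>2 = (\<Sum>e\<in>E. (cmod (cinner e x))\<^sup>2)"
  by (simp add: norm_sq_eq_cinner parseval cnj_mult_self)

lemma cinner_proj_B'_eigen:
  assumes "v \<in> A'" "e \<in> E"
  shows "cinner (PB' *v v) (PB' *v e) = complex_of_real (lam e) * cinner v e"
  using assms E_subset eigen
  by (auto simp: cinner_proj_B'_proj_B' cinner_scale_right)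

lemma eigenvalue_eq: "e \<in> E \<Longrightarrow> lam e = (norm (PB' *v e))\<^sup>2"
  using cinner_proj_B'_eigen[of e e] E_subset cinner_E[of e e]
  by (auto simp: norm_sq_eq_cinner)

lemma eigenvalue_nonneg: "e \<in> E \<Longrightarrow> 0 \<le> lam e"
  by (simp add: eigenvalue_eq)

lemma eigenvalue_le_1: "e \<in> E \<Longrightarrow> lam e \<le> 1"
  using eigenvalue_eq is_proj_norm_le[OF proj_B'] cinner_E[of e e]
  by (metis cinner_self of_real_eq_1_iff)

lemma norm_proj_B'_sq_expansion:
  assumes "v \<in> A'"
  shows "(norm (PB' *v v))\<^sup>2 = (\<Sum>e\<in>E. lam e * (cmod (cinner e v))\<^sup>2)"
proof -
  have "cinner e (compression *v v) = complex_of_real (lam e) * cinner e v" if "e \<in> E" for e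
    using hermitian_compression eigen[OF that] by (simp add: hermitian_def cinner_scale_left)
  then have "cinner (PB' *v v) (PB' *v v) = (\<Sum>e\<in>E. complex_of_real (lam e * (cmod (cinner e v))\<^sup>2))"
    using assms by (simp add: cinner_proj_B'_proj_B' parseval cnj_mult_self mult.left_commute)
  then show ?thesis
    by (simp add: norm_sq_eq_cinner)
qed

definition large_eigvecs :: "real \<Rightarrow> _ set" where
  "large_eigvecs t = {e\<in>E. t \<le> lam e}"

text \<open>The span of \<open>large_eigvecs t\<close>, described by the vanishing of the other coordinates.\<close>

definition large_eigenspace :: "real \<Rightarrow> _ set" where
  "large_eigenspace t = {x\<in>A'. \<forall>e\<in>E - large_eigvecs t. cinner e x = 0}"

lemma csubspace_large_eigenspace: "csubspace (large_eigenspace t)"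
  unfolding large_eigenspace_def by (rule csubspace_orthogonal[OF csubspace_A'])

lemma large_eigenspace_subset: "large_eigenspace t \<subseteq> A'"
  by (auto simp: large_eigenspace_def)

lemma large_eigvecs_subset: "large_eigvecs t \<subseteq> E"
  by (auto simp: large_eigvecs_def)

lemma large_eigvecs_in_large_eigenspace: "large_eigvecs t \<subseteq> large_eigenspace t"
  using E_subset cinner_E by (fastforce simp: large_eigenspace_def large_eigvecs_def split: if_splits)

lemma large_eigenspace_nontrivial:
  assumes "large_eigvecs t \<noteq> {}"
  shows "large_eigenspace t \<noteq> {0}"
proof
  assume trivial: "large_eigenspace t = {0}"
  obtain e where e: "e \<in> large_eigvecs t"
    using assms by blast
  then have "e = 0"
    using trivial large_eigvecs_in_large_eigenspace by blast
  moreover have "cinner e e = 1"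
    using e large_eigvecs_subset cinner_E by (simp add: subset_iff)
  ultimately show False
    by simp
qed

lemma norm_proj_B'_large_eigenspace:
  assumes "v \<in> large_eigenspace t"
  shows "t * (norm v)\<^sup>2 \<le> (norm (PB' *v v))\<^sup>2"
proof -
  have "v \<in> A'"
    using assms large_eigenspace_subset by blast
  have "t * (norm v)\<^sup>2 = (\<Sum>e\<in>E. t * (cmod (cinner e v))\<^sup>2)"
    using \<open>v \<in> A'\<close> by (simp add: norm_sq_expansion sum_distrib_left)
  also have "\<dots> \<le> (\<Sum>e\<in>E. lam e * (cmod (cinner e v))\<^sup>2)"
  proof (rule sum_mono)
    fix e assume "e \<in> E"
    then show "t * (cmod (cinner e v))\<^sup>2 \<le> lam e * (cmod (cinner e v))\<^sup>2"
      using assms by (cases "e \<in> large_eigvecs t")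
        (auto simp: large_eigvecs_def large_eigenspace_def intro: mult_right_mono)
  qed
  also have "\<dots> = (norm (PB' *v v))\<^sup>2"
    using \<open>v \<in> A'\<close> by (simp add: norm_proj_B'_sq_expansion)
  finally show ?thesis .
qed

lemma finite_large_eigvecs: "finite (large_eigvecs t)"
  using finite_subset[OF large_eigvecs_subset finite_E] .

lemma proj_large_image_apply:
  assumes t: "0 < t" and PB: "is_proj PB (cspan ((\<lambda>v. PB' *v v) ` large_eigenspace t))"
  shows "PB *v x = (\<Sum>e\<in>large_eigvecs t. (cinner (PB' *v e) x / complex_of_real (lam e)) *s (PB' *v e))"
    (is "_ = ?y")
proof (rule is_proj_eqI[OF PB])
  have lam_pos: "0 < lam e" if "e \<in> large_eigvecs t" for e
    using that t by (auto simp: large_eigvecs_def)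
  show "?y \<in> cspan ((\<lambda>v. PB' *v v) ` large_eigenspace t)"
    by (rule cspan_sum[OF finite_large_eigvecs]) (use large_eigvecs_in_large_eigenspace in blast)
  fix s assume "s \<in> cspan ((\<lambda>v. PB' *v v) ` large_eigenspace t)"
  then show "cinner s (x - ?y) = 0"
  proof (rule cspan_orthogonal[rotated])
    fix w assume "w \<in> (\<lambda>v. PB' *v v) ` large_eigenspace t"
    then obtain v where v: "v \<in> large_eigenspace t" and w: "w = PB' *v v"
      by blast
    have "v \<in> A'"
      using v large_eigenspace_subset by blast
    have "cinner (PB' *v v) ?y = (\<Sum>e\<in>large_eigvecs t.
        (cinner (PB' *v e) x / complex_of_real (lam e)) * cinner (PB' *v v) (PB' *v e))"
      by (simp add: cinner_sum_right cinner_scale_right)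
    also have "\<dots> = (\<Sum>e\<in>large_eigvecs t. cinner (PB' *v e) x * cinner v e)"
    proof (rule sum.cong[OF refl])
      fix e assume "e \<in> large_eigvecs t"
      then have "e \<in> E" "0 < lam e"
        using lam_pos large_eigvecs_subset by auto
      then show "(cinner (PB' *v e) x / complex_of_real (lam e)) * cinner (PB' *v v) (PB' *v e) =
          cinner (PB' *v e) x * cinner v e"
        using \<open>v \<in> A'\<close> by (simp add: cinner_proj_B'_eigen)
    qed
    also have "\<dots> = (\<Sum>e\<in>E. cnj (cinner e v) * cinner e (PB' *v x))"
    proof (rule sum.mono_neutral_cong_left[OF finite_E large_eigvecs_subset])
      show "\<forall>e\<in>E - large_eigvecs t. cnj (cinner e v) * cinner e (PB' *v x) = 0"
        using v by (simp add: large_eigenspace_def)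
      show "cinner (PB' *v e) x * cinner v e = cnj (cinner e v) * cinner e (PB' *v x)" for e
        by (simp add: is_proj_hermitian[OF proj_B'] cinner_commute[of v])
    qed
    also have "\<dots> = cinner v (PB' *v x)"
      using \<open>v \<in> A'\<close> by (simp add: parseval)
    also have "\<dots> = cinner (PB' *v v) x"
      by (rule is_proj_hermitian[OF proj_B'])
    finally show "cinner w (x - ?y) = 0"
      by (simp add: w cinner_diff_right)
  qed
qed

lemma proj_large_image_on_E:
  assumes t: "0 < t" and PB: "is_proj PB (cspan ((\<lambda>v. PB' *v v) ` large_eigenspace t))"
    and e: "e \<in> E"
  shows "PB *v e = (if e \<in> large_eigvecs t then PB' *v e else 0)"
proof -
  have "PB *v e = (\<Sum>e'\<in>large_eigvecs t. (if e' = e then PB' *v e' else 0))"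
    unfolding proj_large_image_apply[OF t PB]
  proof (intro sum.cong refl)
    fix e' assume e': "e' \<in> large_eigvecs t"
    then have "e' \<in> E" "0 < lam e'"
      using t large_eigvecs_subset by (auto simp: large_eigvecs_def)
    have "cinner (PB' *v e') e = cinner (PB' *v e') (PB' *v e)"
      using is_proj_cinner_proj[OF proj_B', of e' e] is_proj_hermitian[OF proj_B', of e' e] by simp
    also have "\<dots> = (if e' = e then complex_of_real (lam e) else 0)"
      using \<open>e' \<in> E\<close> e E_subset by (auto simp: cinner_proj_B'_eigen cinner_E)
    finally show "(cinner (PB' *v e') e / complex_of_real (lam e')) *s (PB' *v e') =
        (if e' = e then PB' *v e' else 0)"
      using \<open>0 < lam e'\<close> by auto
  qed
  also have "\<dots> = (if e \<in> large_eigvecs t then PB' *v e else 0)"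
    by (rule sum.delta[OF finite_large_eigvecs])
  finally show ?thesis .
qed

lemma quadratic_form_sandwich:
  "cinner x ((PB' ** PA' ** PB') *v x) = complex_of_real (\<Sum>e\<in>E. (cmod (cinner (PB' *v e) x))\<^sup>2)"
proof -
  define u where "u = PA' *v (PB' *v x)"
  have "u \<in> A'"
    unfolding u_def by (rule is_proj_in[OF proj_A'])
  have "cinner x ((PB' ** PA' ** PB') *v x) = cinner x (PB' *v u)"
    by (simp add: u_def matrix_vector_mul_assoc matrix_mul_assoc)
  also have "\<dots> = cinner (PB' *v x) u"
    by (rule is_proj_hermitian[OF proj_B'])
  also have "\<dots> = cinner u u"
    unfolding u_def by (rule is_proj_cinner_proj[OF proj_A', symmetric])
  also have "\<dots> = complex_of_real (\<Sum>e\<in>E. (cmod (cinner e u))\<^sup>2)"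
    using norm_sq_expansion[OF \<open>u \<in> A'\<close>] by (simp add: cinner_self)
  also have "cinner e u = cinner (PB' *v e) x" if "e \<in> E" for e
    using that E_subset
    by (auto simp: u_def is_proj_hermitian[OF proj_A'] is_proj_hermitian[OF proj_B'] is_proj_fixes[OF proj_A'])
  then have "(\<Sum>e\<in>E. (cmod (cinner e u))\<^sup>2) = (\<Sum>e\<in>E. (cmod (cinner (PB' *v e) x))\<^sup>2)"
    by simp
  finally show ?thesis .
qed

lemma loewner_le_proj_large_image:
  assumes t: "0 < t" and PB: "is_proj PB (cspan ((\<lambda>v. PB' *v v) ` large_eigenspace t))"
  shows "loewner_le PB ((1 / t) *\<^sub>R (PB' ** PA' ** PB'))"
  unfolding loewner_le_def psd_def
proof (intro allI)
  fix x
  define a where "a e = cmod (cinner (PB' *v e) x)" for e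
  have "cinner x (PB *v x) = complex_of_real (\<Sum>e\<in>large_eigvecs t. (a e)\<^sup>2 / lam e)"
    unfolding proj_large_image_apply[OF t PB]
    by (simp add: cinner_sum_right cinner_scale_right a_def cinner_commute[of x]
        flip: complex_norm_square)
  moreover have "(\<Sum>e\<in>large_eigvecs t. (a e)\<^sup>2 / lam e) \<le> (\<Sum>e\<in>large_eigvecs t. (a e)\<^sup>2 / t)"
    using t by (intro sum_mono divide_left_mono) (auto simp: large_eigvecs_def)
  moreover have "(\<Sum>e\<in>large_eigvecs t. (a e)\<^sup>2 / t) \<le> (\<Sum>e\<in>E. (a e)\<^sup>2) / t"
    unfolding sum_divide_distrib
    by (rule sum_mono2[OF finite_E large_eigvecs_subset]) (use t in auto)
  ultimately show "Im (cinner x (((1 / t) *\<^sub>R (PB' ** PA' ** PB') - PB) *v x)) = 0 \<and>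
      0 \<le> Re (cinner x (((1 / t) *\<^sub>R (PB' ** PA' ** PB') - PB) *v x))"
    by (simp add: matrix_vector_mult_diff_rdistrib scaleR_matrix_vector_mult cinner_diff_right
        cinner_scale_right quadratic_form_sandwich a_def)
qed

context
  fixes \<rho>
  assumes rho_psd: "psd \<rho>" and rho_range: "range (\<lambda>x. \<rho> *v x) \<subseteq> A'"
begin

lemma trace_rho_mult: "trace (\<rho> ** X) = (\<Sum>e\<in>E. cinner (\<rho> *v e) (X *v e))"
proof (rule trace_matrix_mult_expansion[OF finite_E])
  fix x
  have "\<rho> *v x = (\<Sum>e\<in>E. cinner e (\<rho> *v x) *s e)"
    using expansion rho_range by blast
  also have "\<dots> = (\<Sum>e\<in>E. cinner (\<rho> *v e) x *s e)"
    using psd_imp_hermitian[OF rho_psd] by (simp add: hermitian_def)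
  finally show "\<rho> *v x = (\<Sum>e\<in>E. cinner (\<rho> *v e) x *s e)" .
qed

lemma cinner_rho_proj_B':
  assumes e: "e \<in> E"
  shows "cinner (\<rho> *v e) (PB' *v e) = complex_of_real (lam e * Re (cinner e (\<rho> *v e)))"
proof -
  have "cinner (\<rho> *v e) (PB' *v e) = cinner (PA' *v (\<rho> *v e)) (PB' *v e)"
    using is_proj_fixes[OF proj_A'] rho_range by (simp add: image_subset_iff)
  also have "\<dots> = cinner (\<rho> *v e) (compression *v e)"
    using e E_subset
    by (auto simp: compression_apply is_proj_hermitian[OF proj_A'] is_proj_fixes[OF proj_A'])
  also have "\<dots> = complex_of_real (lam e) * cinner (\<rho> *v e) e"
    by (simp add: eigen[OF e] cinner_scale_right)
  finally show ?thesis
    by (simp add: psd_cinner_self[OF rho_psd])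
qed

lemma Re_trace_rho: "Re (trace \<rho>) = (\<Sum>e\<in>E. Re (cinner e (\<rho> *v e)))"
proof -
  have "trace \<rho> = trace (\<rho> ** mat 1)"
    by simp
  also have "\<dots> = (\<Sum>e\<in>E. cinner (\<rho> *v e) e)"
    by (simp only: trace_rho_mult matrix_vector_mul_lid)
  also have "\<dots> = (\<Sum>e\<in>E. complex_of_real (Re (cinner e (\<rho> *v e))))"
    by (simp add: psd_cinner_self[OF rho_psd])
  finally show ?thesis
    by simp
qed

lemma Re_trace_rho_proj_B': "Re (trace (\<rho> ** PB')) = (\<Sum>e\<in>E. lam e * Re (cinner e (\<rho> *v e)))"
  by (simp add: trace_rho_mult cinner_rho_proj_B')

lemma Re_trace_rho_proj_large_image:
  assumes t: "0 < t" and PB: "is_proj PB (cspan ((\<lambda>v. PB' *v v) ` large_eigenspace t))"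
  shows "Re (trace (\<rho> ** PB)) = (\<Sum>e\<in>large_eigvecs t. lam e * Re (cinner e (\<rho> *v e)))"
proof -
  have "trace (\<rho> ** PB) = (\<Sum>e\<in>E. if t \<le> lam e
      then complex_of_real (lam e * Re (cinner e (\<rho> *v e))) else 0)"
    unfolding trace_rho_mult
    by (intro sum.cong refl)
      (simp add: proj_large_image_on_E[OF t PB] cinner_rho_proj_B' large_eigvecs_def)
  also have "\<dots> = (\<Sum>e\<in>large_eigvecs t. complex_of_real (lam e * Re (cinner e (\<rho> *v e))))"
    unfolding large_eigvecs_def by (rule sum.inter_filter[OF finite_E, symmetric])
  finally show ?thesis
    by simp
qed

lemma trace_rho_proj_large_image_ge:
  assumes t: "0 < t" "t \<le> 1"
    and PB: "is_proj PB (cspan ((\<lambda>v. PB' *v v) ` large_eigenspace t))"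
    and mass: "Re (trace \<rho>) \<le> 1" and overlap: "1 - (1 - t)\<^sup>2 \<le> Re (trace (\<rho> ** PB'))"
  shows "t \<le> Re (trace (\<rho> ** PB))"
proof -
  have "1 - (1 - t) \<le> (\<Sum>e\<in>{e\<in>E. 1 - (1 - t) \<le> lam e}. lam e * Re (cinner e (\<rho> *v e)))"
    using finite_E rho_psd eigenvalue_nonneg eigenvalue_le_1 mass overlap t
    by (intro weighted_mass_above_threshold)
      (auto simp: psd_def Re_trace_rho Re_trace_rho_proj_B')
  then show ?thesis
    by (simp add: Re_trace_rho_proj_large_image[OF t(1) PB] large_eigvecs_def)
qed

end

end

theorem lemma4:
  fixes A' B' :: "(complex^'n) set" and PA' PB' :: "complex^'n^'n" and \<epsilon> :: real
  assumes "csubspace A'" and "csubspace B'"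
    and "is_proj PA' A'" and "is_proj PB' B'"
    and "0 \<le> \<epsilon>" and "\<epsilon> < 1"
  shows "\<exists>A. csubspace A \<and> A \<subseteq> A' \<and>
      (\<forall>v\<in>A. (norm (PB' *v v))\<^sup>2 \<ge> (1 - sqrt \<epsilon>) * (norm v)\<^sup>2) \<and>
      (\<forall>PB. is_proj PB (cspan ((\<lambda>v. PB' *v v) ` A)) \<longrightarrow>
         loewner_le PB ((1 / (1 - sqrt \<epsilon>)) *\<^sub>R (PB' ** PA' ** PB')) \<and>
         (\<forall>\<rho>. psd \<rho> \<and> Re (trace \<rho>) \<le> 1 \<and> range (\<lambda>x. \<rho> *v x) \<subseteq> A' \<and>
               Re (trace (\<rho> ** PB')) \<ge> 1 - \<epsilon>
           \<longrightarrow> A \<noteq> {0} \<and> Re (trace (\<rho> ** PB)) \<ge> 1 - 2 * sqrt \<epsilon>))"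
proof -
  interpret projector_pair A' B' PA' PB'
    using assms(1,3,4) by unfold_locales
  obtain E lam where "compression_eigenbasis A' B' PA' PB' E lam"
    using compression_eigenbasis_exists by blast
  then interpret compression_eigenbasis A' B' PA' PB' E lam .
  define t where "t = 1 - sqrt \<epsilon>"
  have t: "0 < t" "t \<le> 1" "1 - (1 - t)\<^sup>2 = 1 - \<epsilon>"
    using assms(5,6) by (auto simp: t_def)
  show ?thesis
  proof (intro exI[of _ "large_eigenspace t"] conjI ballI allI impI)
    fix PB \<rho>
    assume PB: "is_proj PB (cspan ((\<lambda>v. PB' *v v) ` large_eigenspace t))"
      and "psd \<rho> \<and> Re (trace \<rho>) \<le> 1 \<and> range (\<lambda>x. \<rho> *v x) \<subseteq> A' \<and> 1 - \<epsilon> \<le> Re (trace (\<rho> ** PB'))"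
    then have rho: "psd \<rho>" "range (\<lambda>x. \<rho> *v x) \<subseteq> A'"
      and bound: "t \<le> Re (trace (\<rho> ** PB))"
      using trace_rho_proj_large_image_ge[OF _ _ t(1,2) PB] t(3) by auto
    then show "1 - 2 * sqrt \<epsilon> \<le> Re (trace (\<rho> ** PB))"
      using real_sqrt_ge_zero[OF assms(5)] unfolding t_def by linarith
    have "large_eigvecs t \<noteq> {}"
      using bound t(1) Re_trace_rho_proj_large_image[OF rho t(1) PB] by auto
    then show "large_eigenspace t \<noteq> {0}"
      by (rule large_eigenspace_nontrivial)
  qed (use csubspace_large_eigenspace large_eigenspace_subset norm_proj_B'_large_eigenspace
      loewner_le_proj_large_image[OF t(1)] in \<open>auto simp: t_def\<close>)
qed

end
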